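(* Suppose each $\mathcal D_i$ has marginal on $\mathcal X$ equal to $\rho$, each $R_i$ is convex and Fréchet differentiable on $\mathcal H$, and $\ell(h,(x,y))=(h(x)-y)^2$. Let $\theta^*$ be a global minimizer of $L$ and $\omega$ satisfy $\nabla_\omega L(\omega)^\top v\le\epsilon$ for all $v\in\mathcal B=\{\theta\in\mathbb R^d:\|\theta\|_2\le1\}$. Then for all $R>0$, $$L(\omega)-L(\theta^* )\le R\epsilon+2\bar R\cdot\inf_{v\in\mathcal B}\big\|u-(K_\eta\phi)^\top(R\,v)\big\|_\rho,$$ where $\|\cdot\|_\rho$ is the $L_2(\rho)$-norm.
   Context: Let $\mathcal Y\subseteq\mathbb R$, $\rho$ a distribution on $\mathcal X$, $\mathcal D_1,\dots,\mathcal D_n$ distributions on $\mathcal X\times\mathcal Y$, $\phi:\mathcal X\to\mathbb R^d$, $h_\theta=\phi(\cdot)^\top\theta$. $\mathcal H$ is a Hilbert space of functions $\mathcal X\to\mathcal Y$ with inner product $\int fg\,d\rho$ containing all $h_\theta$. $R_i(h)=\mathbb E_{(x,y)\sim\mathcal D_i}[\ell(h,(x,y))]$. Fréchet derivative: bounded linear $A$ with $|R(h+h_1)-R(h)-A(h_1)|/\|h_1\|_{\mathcal H}\to0$; $A=\langle\cdot,a_h\rangle_{\mathcal H}$ and $\delta R/\delta h:=a_h$. For $\eta>0$, $\theta_i=\theta-\eta\nabla_\theta R_i(h_\theta)$ and $L(\theta)=\frac1n\sum_iR_i(h_{\theta_i})$; $\omega_i,\theta^*_i$ are defined from $\omega,\theta^*$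 in the same way. Define $K_\eta=\mathbb E_{x\sim\rho}[I_d-2\eta\phi(x)\phi(x)^\top]$, $u(x')=\Big(\sum_{i}(\delta R_i/\delta h_{\omega_i})(x')(h_{\omega_i}(x')-h_{\theta^*_i}(x'))\Big)/\Big(\sum_i(\delta R_i/\delta h_{\omega_i})(x')\Big)$, and $\bar R=\frac1n\sum_iR_i^{1/2}(h_{\omega_i})=\frac1n\sum_i\{\mathbb E_{(x,y)\sim\mathcal D_i}[(y-h_{\omega_i}(x))^2]\}^{1/2}$. *)

theory Defs
  imports "HOL-Probability.Probability"
begin

definition hth :: "('x \<Rightarrow> real^'d) \<Rightarrow> real^'d \<Rightarrow> 'x \<Rightarrow> real" where
  "hth \<phi> \<theta> = (\<lambda>x. \<phi> x \<bullet> \<theta>)"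

definition risk :: "('x \<times> real) measure \<Rightarrow> ('x \<Rightarrow> real) \<Rightarrow> real" where
  "risk D h = (\<integral>z. (h (fst z) - snd z)^2 \<partial>D)"

definition grad :: "(real^'d \<Rightarrow> real) \<Rightarrow> real^'d \<Rightarrow> real^'d" where
  "grad f \<theta> = (THE g. (f has_derivative (\<lambda>v. g \<bullet> v)) (at \<theta>))"

definition adapt :: "(nat \<Rightarrow> ('x \<times> real) measure) \<Rightarrow> ('x \<Rightarrow> real^'d) \<Rightarrow> real \<Rightarrow> nat \<Rightarrow> real^'d \<Rightarrow> real^'d" where
  "adapt D \<phi> \<eta> i \<theta> = \<theta> - \<eta> *\<^sub>R grad (\<lambda>t. risk (D i) (hth \<phi> t)) \<theta>"

definition Lmeta :: "(nat \<Rightarrow> ('x \<times> real) measure) \<Rightarrow> ('x \<Rightarrow> real^'d) \<Rightarrow> real \<Rightarrow> nat \<Rightarrow> real^'d \<Rightarrow> real" where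
  "Lmeta D \<phi> \<eta> n \<theta> = (1 / real n) * (\<Sum>i<n. risk (D i) (hth \<phi> (adapt D \<phi> \<eta> i \<theta>)))"

definition inner_rho :: "'x measure \<Rightarrow> ('x \<Rightarrow> real) \<Rightarrow> ('x \<Rightarrow> real) \<Rightarrow> real" where
  "inner_rho \<rho> f g = (\<integral>x. f x * g x \<partial>\<rho>)"

definition norm_rho :: "'x measure \<Rightarrow> ('x \<Rightarrow> real) \<Rightarrow> real" where
  "norm_rho \<rho> f = sqrt (\<integral>x. (f x)^2 \<partial>\<rho>)"

definition norm_rho_ext :: "'x measure \<Rightarrow> ('x \<Rightarrow> real) \<Rightarrow> ereal" where
  "norm_rho_ext \<rho> f =
     (if f \<in> borel_measurable \<rho> \<and> integrable \<rho> (\<lambda>x. (f x)^2)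
      then ereal (norm_rho \<rho> f) else \<infinity>)"

definition hilbert_fun_space :: "'x measure \<Rightarrow> ('x \<Rightarrow> real) set \<Rightarrow> bool" where
  "hilbert_fun_space \<rho> H \<longleftrightarrow>
     (\<forall>f\<in>H. f \<in> borel_measurable \<rho> \<and> integrable \<rho> (\<lambda>x. (f x)^2)) \<and>
     (\<lambda>x. 0) \<in> H \<and>
     (\<forall>f\<in>H. \<forall>g\<in>H. (\<lambda>x. f x + g x) \<in> H) \<and>
     (\<forall>c. \<forall>f\<in>H. (\<lambda>x. c * f x) \<in> H) \<and>
     (\<forall>s. (\<forall>k. s k \<in> H) \<longrightarrow>
          (\<forall>e>0. \<exists>N. \<forall>m\<ge>N. \<forall>k\<ge>N. norm_rho \<rho> (\<lambda>x. s m x - s k x) < e) \<longrightarrow>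
          (\<exists>g\<in>H. (\<lambda>k. norm_rho \<rho> (\<lambda>x. s k x - g x)) \<longlonglongrightarrow> 0))"

definition frechet_grad :: "'x measure \<Rightarrow> ('x \<Rightarrow> real) set \<Rightarrow> (('x \<Rightarrow> real) \<Rightarrow> real)
    \<Rightarrow> ('x \<Rightarrow> real) \<Rightarrow> ('x \<Rightarrow> real) \<Rightarrow> bool" where
  "frechet_grad \<rho> H R h a \<longleftrightarrow> a \<in> H \<and>
     (\<forall>e>0. \<exists>\<delta>>0. \<forall>h1\<in>H. 0 < norm_rho \<rho> h1 \<and> norm_rho \<rho> h1 < \<delta> \<longrightarrow>
        \<bar>R (\<lambda>x. h x + h1 x) - R h - inner_rho \<rho> h1 a\<bar> / norm_rho \<rho> h1 < e)"

definition frechet_differentiable_on :: "'x measure \<Rightarrow> ('x \<Rightarrow> real) set \<Rightarrow> (('x \<Rightarrow> real) \<Rightarrow> real) \<Rightarrow> bool" where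
  "frechet_differentiable_on \<rho> H R \<longleftrightarrow> (\<forall>h\<in>H. \<exists>a. frechet_grad \<rho> H R h a)"

definition convex_on_H :: "('x \<Rightarrow> real) set \<Rightarrow> (('x \<Rightarrow> real) \<Rightarrow> real) \<Rightarrow> bool" where
  "convex_on_H H R \<longleftrightarrow> (\<forall>f\<in>H. \<forall>g\<in>H. \<forall>t::real. 0 \<le> t \<and> t \<le> 1 \<longrightarrow>
      R (\<lambda>x. t * f x + (1 - t) * g x) \<le> t * R f + (1 - t) * R g)"

definition Keta :: "'x measure \<Rightarrow> ('x \<Rightarrow> real^'d) \<Rightarrow> real \<Rightarrow> real^'d^'d" where
  "Keta \<rho> \<phi> \<eta> = (\<integral>x. (mat 1 - (2 * \<eta>) *\<^sub>R (\<chi> i j. \<phi> x $ i * \<phi> x $ j)) \<partial>\<rho>)"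

end

theory Submission
  imports Defs
begin

(*
  Along linear predictors the square-loss risk is an exact quadratic,
  R_i(h_(t+s)) = R_i(h_t) + g_i(t)^T s + ||h_s||^2 with g_i(t) = 2 M t - 2 b_i and M = E[phi phi^T].
  Hence the inner step is affine, theta_i = K_eta theta + 2 eta b_i, and the displacement
  omega_i - theta_star_i = K_eta (omega - theta_star) is the same for every task.  Testing the Frechet
  gradient a_i of R_i at h_(omega_i) along lines of H identifies g_i(omega_i)^T s = <h_s, a_i> and
  gives ||a_i|| <= 2 R_i^(1/2).  Convexity of each R_i along the displacement yields
  L(omega) - L(theta_star) <= (1/n) sum_i <h_(K_eta (omega - theta_star)), a_i>, and wherever sum_i a_i does
  not vanish that predictor coincides with u.  Splitting it as h_(K_eta R v) + (u - h_(K_eta R v)),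
  the first part contributes grad L(omega)^T (R v) <= R eps by the chain rule, the second at most
  2 Rbar ||u - (K_eta phi)^T (R v)|| by Cauchy-Schwarz.
*)

definition square_integrable :: "'a measure \<Rightarrow> ('a \<Rightarrow> real) \<Rightarrow> bool" where
  "square_integrable M f \<longleftrightarrow> f \<in> borel_measurable M \<and> integrable M (\<lambda>x. (f x)^2)"

lemma square_integrable_imp_integrable_mult:
  assumes f: "square_integrable M f" and g: "square_integrable M g"
  shows "integrable M (\<lambda>x. f x * g x)"
proof (rule Bochner_Integration.integrable_bound[where f = "\<lambda>x. (f x)^2 + (g x)^2"])
  show "integrable M (\<lambda>x. (f x)^2 + (g x)^2)" "(\<lambda>x. f x * g x) \<in> borel_measurable M"
    using f g by (auto simp: square_integrable_def)
  have "\<bar>f x * g x\<bar> \<le> (f x)^2 + (g x)^2" for x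
  proof -
    have "2 * (\<bar>f x\<bar> * \<bar>g x\<bar>) \<le> (f x)^2 + (g x)^2"
      using zero_le_power2[of "\<bar>f x\<bar> - \<bar>g x\<bar>"] by (simp add: power2_diff)
    moreover have "0 \<le> \<bar>f x\<bar> * \<bar>g x\<bar>" by simp
    ultimately have "\<bar>f x\<bar> * \<bar>g x\<bar> \<le> (f x)^2 + (g x)^2" by linarith
    then show ?thesis by (simp add: abs_mult)
  qed
  then show "AE x in M. norm (f x * g x) \<le> norm ((f x)^2 + (g x)^2)"
    by simp
qed

lemma square_integrable_add:
  assumes f: "square_integrable M f" and g: "square_integrable M g"
  shows "square_integrable M (\<lambda>x. f x + g x)"
proof -
  have "(\<lambda>x. (f x + g x)^2) = (\<lambda>x. (f x)^2 + 2 * (f x * g x) + (g x)^2)"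
    by (simp add: fun_eq_iff power2_sum algebra_simps)
  then show ?thesis
    using f g square_integrable_imp_integrable_mult[OF f g]
    by (auto simp: square_integrable_def intro: borel_measurable_add)
qed

lemma square_integrable_cmult: "square_integrable M f \<Longrightarrow> square_integrable M (\<lambda>x. c * f x)"
  by (auto simp: square_integrable_def power_mult_distrib)

lemma square_integrable_diff:
  "square_integrable M f \<Longrightarrow> square_integrable M g \<Longrightarrow> square_integrable M (\<lambda>x. f x - g x)"
  using square_integrable_add[of M f "\<lambda>x. -1 * g x"] square_integrable_cmult[of M g "-1"] by simp

lemma square_integrable_sum:
  "(\<And>i. i \<in> I \<Longrightarrow> square_integrable M (f i)) \<Longrightarrow> square_integrable M (\<lambda>x. \<Sum>i\<in>I. f i x)"
proof (induction I rule: infinite_finite_induct)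
  case (insert i I)
  then show ?case by (simp add: square_integrable_add)
qed (simp_all add: square_integrable_def)

lemma integral_square_add:
  assumes f: "square_integrable M f" and g: "square_integrable M g"
  shows "(\<integral>x. (f x + g x)^2 \<partial>M)
    = (\<integral>x. (f x)^2 \<partial>M) + 2 * (\<integral>x. f x * g x \<partial>M) + (\<integral>x. (g x)^2 \<partial>M)"
proof -
  have "(\<integral>x. (f x + g x)^2 \<partial>M) = (\<integral>x. (f x)^2 + 2 * (f x * g x) + (g x)^2 \<partial>M)"
    by (rule Bochner_Integration.integral_cong) (auto simp: power2_sum)
  also have "\<dots> = (\<integral>x. (f x)^2 \<partial>M) + 2 * (\<integral>x. f x * g x \<partial>M) + (\<integral>x. (g x)^2 \<partial>M)"
    using f g square_integrable_imp_integrable_mult[OF f g] by (simp add: square_integrable_def)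
  finally show ?thesis .
qed

lemma norm_rho_nonneg: "0 \<le> norm_rho M f"
  by (simp add: norm_rho_def)

lemma norm_rho_cmult: "norm_rho M (\<lambda>x. c * f x) = \<bar>c\<bar> * norm_rho M f"
  by (simp add: norm_rho_def power_mult_distrib real_sqrt_mult)

lemma inner_rho_cmult: "inner_rho M (\<lambda>x. c * f x) g = c * inner_rho M f g"
  by (simp add: inner_rho_def mult.assoc)

lemma abs_integral_mult_le_norm_rho:
  assumes f: "square_integrable M f" and g: "square_integrable M g"
  shows "\<bar>\<integral>x. f x * g x \<partial>M\<bar> \<le> norm_rho M f * norm_rho M g"
proof -
  define A where "A = (\<integral>x. (f x)^2 \<partial>M)"
  define B where "B = (\<integral>x. (g x)^2 \<partial>M)"
  define C where "C = (\<integral>x. f x * g x \<partial>M)"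
  have quadratic_nonneg: "0 \<le> A - 2 * t * C + t^2 * B" for t
  proof -
    have "0 \<le> (\<integral>x. (f x + (- t) * g x)^2 \<partial>M)" by simp
    also have "\<dots> = A + 2 * (\<integral>x. f x * ((- t) * g x) \<partial>M) + (\<integral>x. ((- t) * g x)^2 \<partial>M)"
      unfolding A_def by (rule integral_square_add[OF f square_integrable_cmult[OF g]])
    also have "\<dots> = A - 2 * t * C + t^2 * B"
      by (simp add: B_def C_def power_mult_distrib mult.left_commute)
    finally show ?thesis .
  qed
  have "C^2 \<le> A * B"
  proof (cases "B = 0")
    case True
    have "C = 0"
    proof (rule ccontr)
      assume "C \<noteq> 0"
      then show False
        using quadratic_nonneg[of "(A + 1) / (2 * C)"] True by (simp add: field_simps)
    qed
    then show ?thesis using True by simp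
  next
    case False
    then have "B > 0" by (simp add: B_def order_less_le)
    have "0 \<le> A - 2 * (C / B) * C + (C / B)^2 * B" by (rule quadratic_nonneg)
    also have "\<dots> = (A * B - C^2) / B"
      using \<open>B > 0\<close> by (simp add: field_simps power2_eq_square)
    finally show ?thesis using \<open>B > 0\<close> by (simp add: zero_le_divide_iff)
  qed
  then have "sqrt (C^2) \<le> sqrt (A * B)" by (rule real_sqrt_le_mono)
  then show ?thesis by (simp add: A_def B_def C_def norm_rho_def real_sqrt_mult)
qed

lemma sum_inner_rho_eq_integral:
  assumes "finite I" and "square_integrable M f" and "\<And>i. i \<in> I \<Longrightarrow> square_integrable M (a i)"
  shows "(\<Sum>i\<in>I. inner_rho M f (a i)) = (\<integral>x. f x * (\<Sum>i\<in>I. a i x) \<partial>M)"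
proof -
  have "(\<integral>x. f x * (\<Sum>i\<in>I. a i x) \<partial>M) = (\<Sum>i\<in>I. \<integral>x. f x * a i x \<partial>M)"
    unfolding sum_distrib_left
    using assms square_integrable_imp_integrable_mult by (subst Bochner_Integration.integral_sum) auto
  then show ?thesis by (simp add: inner_rho_def)
qed

lemma has_derivative_quadratic_expansion:
  fixes f :: "'a::real_inner \<Rightarrow> real"
  assumes expansion: "\<And>s. f (t + s) = f t + g \<bullet> s + Q s"
    and remainder: "\<And>s. 0 \<le> Q s \<and> Q s \<le> C * (norm s)^2"
  shows "(f has_derivative (\<lambda>s. g \<bullet> s)) (at t)"
  unfolding has_derivative_at_alt
proof (intro conjI allI impI bounded_linear_inner_right)
  fix e :: real assume "e > 0"
  define d where "d = e / (\<bar>C\<bar> + 1)"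
  have "d > 0" using \<open>e > 0\<close> by (simp add: d_def)
  moreover have "norm (f y - f t - g \<bullet> (y - t)) \<le> e * norm (y - t)"
    if "norm (y - t) < d" for y
  proof -
    have "norm (f y - f t - g \<bullet> (y - t)) = Q (y - t)"
      using expansion[of "y - t"] remainder[of "y - t"] by simp
    also have "\<dots> \<le> C * (norm (y - t))^2"
      using remainder by blast
    also have "\<dots> \<le> (\<bar>C\<bar> + 1) * (norm (y - t))^2"
      by (rule mult_right_mono) auto
    also have "\<dots> = (\<bar>C\<bar> + 1) * norm (y - t) * norm (y - t)"
      by (simp add: power2_eq_square)
    also have "\<dots> \<le> (\<bar>C\<bar> + 1) * d * norm (y - t)"
      using that by (intro mult_right_mono mult_left_mono) auto
    finally show ?thesis by (simp add: d_def)
  qed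
  ultimately show "\<exists>d>0. \<forall>y. norm (y - t) < d \<longrightarrow> norm (f y - f t - g \<bullet> (y - t)) \<le> e * norm (y - t)"
    by blast
qed

lemma grad_eqI:
  fixes f :: "real^'d \<Rightarrow> real"
  assumes "(f has_derivative (\<lambda>v. g \<bullet> v)) (at x)"
  shows "grad f x = g"
  unfolding grad_def
proof (rule the_equality)
  fix g' assume "(f has_derivative (\<lambda>v. g' \<bullet> v)) (at x)"
  then have "(\<lambda>v. g' \<bullet> v) = (\<lambda>v. g \<bullet> v)" using assms has_derivative_unique by blast
  then have "(g' - g) \<bullet> (g' - g) = 0" by (metis inner_diff_left right_minus_eq)
  then show "g' = g" by simp
qed (rule assms)

text \<open>Along the line \<open>h + s g\<close> the Frechet quotient is \<open>\<bar>B - \<langle>g, a\<rangle> + s C\<bar> / \<parallel>g\<parallel>\<close>.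
  The bound on \<open>B\<close> covers \<open>\<parallel>g\<parallel> = 0\<close>, where the Frechet condition says nothing.\<close>
lemma frechet_grad_inner_eq:
  assumes fg: "frechet_grad \<rho> H R h a"
    and scaled: "\<And>s. (\<lambda>x. s * g x) \<in> H"
    and g_L2: "square_integrable \<rho> g" and a_L2: "square_integrable \<rho> a"
    and expansion: "\<And>s. R (\<lambda>x. h x + s * g x) = R h + s * B + s^2 * C"
    and B_bound: "\<bar>B\<bar> \<le> c * norm_rho \<rho> g"
  shows "inner_rho \<rho> g a = B"
proof (cases "norm_rho \<rho> g = 0")
  case True
  then show ?thesis
    using abs_integral_mult_le_norm_rho[OF g_L2 a_L2] B_bound by (simp add: inner_rho_def)
next
  case False
  define q where "q = norm_rho \<rho> g"
  have "q > 0" using False norm_rho_nonneg[of \<rho> g] by (simp add: q_def)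
  have "\<bar>B - inner_rho \<rho> g a\<bar> \<le> 0 + e'" if "e' > 0" for e'
  proof -
    define e where "e = e' / (2 * q)"
    have "e > 0" using \<open>e' > 0\<close> \<open>q > 0\<close> by (simp add: e_def)
    then obtain \<delta> where "\<delta> > 0" and \<delta>: "\<And>h1. h1 \<in> H \<Longrightarrow> 0 < norm_rho \<rho> h1 \<Longrightarrow> norm_rho \<rho> h1 < \<delta> \<Longrightarrow>
        \<bar>R (\<lambda>x. h x + h1 x) - R h - inner_rho \<rho> h1 a\<bar> / norm_rho \<rho> h1 < e"
      using fg unfolding frechet_grad_def by meson
    define s where "s = min (\<delta> / (2 * q)) (e * q / (\<bar>C\<bar> + 1))"
    have "s > 0" using \<open>\<delta> > 0\<close> \<open>q > 0\<close> \<open>e > 0\<close> by (simp add: s_def)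
    have "s * q < \<delta>"
      using \<open>\<delta> > 0\<close> \<open>q > 0\<close> mult_right_mono[of s "\<delta> / (2 * q)" q] by (simp add: s_def)
    have "s * \<bar>C\<bar> \<le> e * q"
      using \<open>e > 0\<close> \<open>q > 0\<close> mult_mono[of s "e * q / (\<bar>C\<bar> + 1)" "\<bar>C\<bar>" "\<bar>C\<bar> + 1"]
      by (simp add: s_def)
    have "\<bar>s * B + s^2 * C - s * inner_rho \<rho> g a\<bar> / (s * q) < e"
      using \<delta>[OF scaled, of s] \<open>s > 0\<close> \<open>q > 0\<close> \<open>s * q < \<delta>\<close>
      by (simp add: expansion inner_rho_cmult norm_rho_cmult q_def)
    moreover have "s * B + s^2 * C - s * inner_rho \<rho> g a = s * (B - inner_rho \<rho> g a + s * C)"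
      by (simp add: power2_eq_square algebra_simps)
    ultimately have "\<bar>B - inner_rho \<rho> g a + s * C\<bar> < e * q"
      using \<open>s > 0\<close> \<open>q > 0\<close> by (simp add: abs_mult divide_less_eq)
    moreover have "\<bar>B - inner_rho \<rho> g a\<bar> \<le> \<bar>B - inner_rho \<rho> g a + s * C\<bar> + s * \<bar>C\<bar>"
      using abs_triangle_ineq4[of "B - inner_rho \<rho> g a + s * C" "s * C"] \<open>s > 0\<close>
      by (simp add: abs_mult)
    ultimately have "\<bar>B - inner_rho \<rho> g a\<bar> < 2 * (e * q)"
      using \<open>s * \<bar>C\<bar> \<le> e * q\<close> by linarith
    then show ?thesis using \<open>q > 0\<close> by (simp add: e_def)
  qed
  then have "\<bar>B - inner_rho \<rho> g a\<bar> \<le> 0" by (rule field_le_epsilon)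
  then show ?thesis by simp
qed

text \<open>The case \<open>d = 0\<close> is separate because \<open>ereal 0 * \<infinity> = 0\<close>.\<close>
lemma ereal_le_add_mult_INF:
  fixes N :: "'a \<Rightarrow> ereal"
  assumes "0 \<le> d" and "d = 0 \<Longrightarrow> x \<le> c"
    and finite_bound: "\<And>v r. v \<in> S \<Longrightarrow> N v = ereal r \<Longrightarrow> x \<le> c + d * r"
    and "\<And>v. v \<in> S \<Longrightarrow> N v \<noteq> -\<infinity>"
  shows "ereal x \<le> ereal c + ereal d * (INF v\<in>S. N v)"
proof (cases "d = 0")
  case True
  then show ?thesis using assms(2) by (simp add: zero_ereal_def[symmetric])
next
  case False
  then have "d > 0" using \<open>0 \<le> d\<close> by simp
  have "ereal ((x - c) / d) \<le> N v" if "v \<in> S" for v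
  proof (cases "N v")
    case (real r)
    then show ?thesis
      using finite_bound[OF that real] \<open>d > 0\<close> by (simp add: divide_le_eq mult.commute)
  qed (use assms(4)[OF that] in auto)
  then have "ereal ((x - c) / d) \<le> (INF v\<in>S. N v)" by (rule INF_greatest)
  then have "ereal d * ereal ((x - c) / d) \<le> ereal d * (INF v\<in>S. N v)"
    by (rule ereal_mult_left_mono) (use \<open>d > 0\<close> in simp)
  then have "ereal c + ereal (x - c) \<le> ereal c + ereal d * (INF v\<in>S. N v)"
    using \<open>d > 0\<close> by (intro add_left_mono) simp
  then show ?thesis by simp
qed

lemma vec_lambda_eq_sum_axis:
  "(\<chi> j k. f j k) = (\<Sum>j\<in>UNIV. \<Sum>k\<in>UNIV. (f j k :: real) *\<^sub>R axis j (axis k 1))"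
proof -
  have sum_if_const: "(\<Sum>x\<in>S. if P then g x else 0) = (if P then sum g S else (0::real))"
    for P S g
    by simp
  have axis_axis: "axis j (axis k (1::real)) $ a $ c = (if j = a then (if k = c then 1 else 0) else 0)"
    for j k a c
    by (simp add: axis_def)
  show ?thesis
    by (simp add: vec_eq_iff axis_axis if_distrib[of "\<lambda>x. f _ _ * x"] sum_if_const cong: if_cong)
qed

locale square_loss_tasks =
  fixes \<rho> :: "'x measure" and D :: "nat \<Rightarrow> ('x \<times> real) measure" and n :: nat
    and \<phi> :: "'x \<Rightarrow> real^'d" and H :: "('x \<Rightarrow> real) set"
  assumes rho_prob: "prob_space \<rho>"
    and D_sets: "\<And>i. i < n \<Longrightarrow> sets (D i) = sets (\<rho> \<Otimes>\<^sub>M borel)"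
    and D_marg: "\<And>i. i < n \<Longrightarrow> distr (D i) \<rho> fst = \<rho>"
    and y_L2: "\<And>i. i < n \<Longrightarrow> integrable (D i) (\<lambda>z. (snd z)^2)"
    and H: "hilbert_fun_space \<rho> H"
    and H_lin: "\<And>\<theta>. hth \<phi> \<theta> \<in> H"
begin

lemma square_integrable_H: "f \<in> H \<Longrightarrow> square_integrable \<rho> f"
  using H unfolding hilbert_fun_space_def square_integrable_def by blast

lemma H_cmult: "f \<in> H \<Longrightarrow> (\<lambda>x. c * f x) \<in> H"
  using H unfolding hilbert_fun_space_def by blast

lemma square_integrable_hth: "square_integrable \<rho> (hth \<phi> t)"
  using square_integrable_H H_lin by blast

lemma square_integrable_feature: "square_integrable \<rho> (\<lambda>x. \<phi> x $ j)"
  using square_integrable_hth[of "axis j 1"] by (simp add: hth_def inner_axis)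

lemma measurable_fst_task: "i < n \<Longrightarrow> fst \<in> measurable (D i) \<rho>"
  using measurable_cong_sets[OF D_sets refl, of i \<rho>] measurable_fst by blast

lemma square_integrable_snd_task: "i < n \<Longrightarrow> square_integrable (D i) snd"
  using measurable_cong_sets[OF D_sets refl, of i borel] measurable_snd y_L2
  by (auto simp: square_integrable_def)

lemma integral_task_fst:
  fixes f :: "'x \<Rightarrow> real"
  assumes "i < n" and "f \<in> borel_measurable \<rho>"
  shows "(\<integral>z. f (fst z) \<partial>D i) = (\<integral>x. f x \<partial>\<rho>)"
  using integral_distr[OF measurable_fst_task[OF assms(1)] assms(2)] D_marg[OF assms(1)] by simp

lemma square_integrable_task_fst:
  assumes "i < n" and f: "square_integrable \<rho> f"
  shows "square_integrable (D i) (\<lambda>z. f (fst z))"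
  using f integrable_distr_eq[OF measurable_fst_task[OF \<open>i < n\<close>], of "\<lambda>x. (f x)^2"]
    D_marg[OF \<open>i < n\<close>] measurable_compose[OF measurable_fst_task[OF \<open>i < n\<close>]]
  by (auto simp: square_integrable_def)

lemma norm_rho_task_fst:
  "i < n \<Longrightarrow> square_integrable \<rho> f \<Longrightarrow> norm_rho (D i) (\<lambda>z. f (fst z)) = norm_rho \<rho> f"
  using integral_task_fst[of i "\<lambda>x. (f x)^2"] by (auto simp: norm_rho_def square_integrable_def)

definition residual :: "nat \<Rightarrow> real^'d \<Rightarrow> 'x \<times> real \<Rightarrow> real" where
  "residual i t z = hth \<phi> t (fst z) - snd z"

definition risk_grad :: "nat \<Rightarrow> real^'d \<Rightarrow> real^'d" where
  "risk_grad i t = (\<chi> j. 2 * (\<integral>z. residual i t z * \<phi> (fst z) $ j \<partial>D i))"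

lemma square_integrable_residual: "i < n \<Longrightarrow> square_integrable (D i) (residual i t)"
  unfolding residual_def[abs_def]
  by (intro square_integrable_diff square_integrable_task_fst square_integrable_hth
      square_integrable_snd_task)

lemma risk_hth_residual: "risk (D i) (hth \<phi> t) = (\<integral>z. (residual i t z)^2 \<partial>D i)"
  by (simp add: risk_def residual_def)

lemma sqrt_risk_hth: "sqrt (risk (D i) (hth \<phi> t)) = norm_rho (D i) (residual i t)"
  by (simp add: risk_hth_residual norm_rho_def)

lemma risk_grad_inner:
  assumes "i < n"
  shows "risk_grad i t \<bullet> s = 2 * (\<integral>z. residual i t z * hth \<phi> s (fst z) \<partial>D i)"
proof -
  have "(\<integral>z. residual i t z * hth \<phi> s (fst z) \<partial>D i)
      = (\<integral>z. (\<Sum>j\<in>UNIV. s $ j * (residual i t z * \<phi> (fst z) $ j)) \<partial>D i)"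
    by (simp add: hth_def inner_vec_def sum_distrib_left ac_simps)
  also have "\<dots> = (\<Sum>j\<in>UNIV. s $ j * (\<integral>z. residual i t z * \<phi> (fst z) $ j \<partial>D i))"
    using square_integrable_imp_integrable_mult[OF square_integrable_residual
        square_integrable_task_fst[OF _ square_integrable_feature]] \<open>i < n\<close>
    by simp
  finally show ?thesis by (simp add: risk_grad_def inner_vec_def sum_distrib_left ac_simps)
qed

lemma risk_add_cmult:
  assumes "i < n" and g: "square_integrable \<rho> g"
  shows "risk (D i) (\<lambda>x. hth \<phi> t x + s * g x) = risk (D i) (hth \<phi> t)
    + s * (2 * (\<integral>z. residual i t z * g (fst z) \<partial>D i)) + s^2 * (\<integral>x. (g x)^2 \<partial>\<rho>)"
proof -
  have g_task: "square_integrable (D i) (\<lambda>z. s * g (fst z))"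
    by (intro square_integrable_cmult square_integrable_task_fst[OF \<open>i < n\<close> g])
  have "risk (D i) (\<lambda>x. hth \<phi> t x + s * g x) = (\<integral>z. (residual i t z + s * g (fst z))^2 \<partial>D i)"
    by (simp add: risk_def residual_def algebra_simps)
  also have "\<dots> = risk (D i) (hth \<phi> t) + 2 * (\<integral>z. residual i t z * (s * g (fst z)) \<partial>D i)
      + (\<integral>z. (s * g (fst z))^2 \<partial>D i)"
    by (simp only: integral_square_add[OF square_integrable_residual[OF \<open>i < n\<close>] g_task]
        risk_hth_residual)
  also have "(\<integral>z. (s * g (fst z))^2 \<partial>D i) = s^2 * (\<integral>x. (g x)^2 \<partial>\<rho>)"
    using integral_task_fst[OF \<open>i < n\<close>, of "\<lambda>x. (g x)^2"] g
    by (simp add: power_mult_distrib square_integrable_def borel_measurable_integrable)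
  finally show ?thesis by (simp add: mult.left_commute)
qed

lemma risk_hth_add:
  "i < n \<Longrightarrow> risk (D i) (hth \<phi> (t + s))
    = risk (D i) (hth \<phi> t) + risk_grad i t \<bullet> s + (\<integral>x. (hth \<phi> s x)^2 \<partial>\<rho>)"
  using risk_add_cmult[OF _ square_integrable_hth, of i t 1 s]
  by (simp add: risk_grad_inner hth_def inner_add_right)

lemma integral_hth_square_le:
  "(\<integral>x. (hth \<phi> s x)^2 \<partial>\<rho>) \<le> (\<integral>x. (norm (\<phi> x))^2 \<partial>\<rho>) * (norm s)^2"
proof -
  have "(norm (\<phi> x))^2 = (\<Sum>j\<in>UNIV. (\<phi> x $ j)^2)" for x
    by (simp add: norm_vec_def L2_set_def sum_nonneg)
  moreover have "integrable \<rho> (\<lambda>x. \<Sum>j\<in>UNIV. (\<phi> x $ j)^2)"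
    using square_integrable_feature
    by (intro Bochner_Integration.integrable_sum) (auto simp: square_integrable_def)
  ultimately have "integrable \<rho> (\<lambda>x. (norm (\<phi> x))^2)"
    by simp
  moreover have "(hth \<phi> s x)^2 \<le> (norm (\<phi> x))^2 * (norm s)^2" for x
    using power_mono[OF Cauchy_Schwarz_ineq2[of "\<phi> x" s] abs_ge_zero, of 2]
    by (simp add: hth_def power_mult_distrib)
  ultimately have "(\<integral>x. (hth \<phi> s x)^2 \<partial>\<rho>) \<le> (\<integral>x. (norm (\<phi> x))^2 * (norm s)^2 \<partial>\<rho>)"
    using square_integrable_hth[of s] by (intro integral_mono) (auto simp: square_integrable_def)
  then show ?thesis by simp
qed

lemma has_derivative_risk_hth:
  "i < n \<Longrightarrow> ((\<lambda>t. risk (D i) (hth \<phi> t)) has_derivative (\<lambda>s. risk_grad i t \<bullet> s)) (at t)"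
  using integral_hth_square_le
  by (intro has_derivative_quadratic_expansion[OF risk_hth_add]) auto

lemma risk_hth_diff_le:
  assumes "i < n"
  shows "risk (D i) (hth \<phi> t) - risk (D i) (hth \<phi> t') \<le> risk_grad i t \<bullet> (t - t')"
  using risk_hth_add[OF assms, of t "t' - t"] by (simp add: inner_diff_right)

definition second_moment :: "real^'d^'d" where
  "second_moment = (\<chi> j k. \<integral>x. \<phi> x $ j * \<phi> x $ k \<partial>\<rho>)"

definition cross_moment :: "nat \<Rightarrow> real^'d" where
  "cross_moment i = (\<chi> j. \<integral>z. snd z * \<phi> (fst z) $ j \<partial>D i)"

lemma risk_grad_eq:
  assumes "i < n"
  shows "risk_grad i t = 2 *\<^sub>R (second_moment *v t) - 2 *\<^sub>R cross_moment i"
proof -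
  have feature_task: "square_integrable (D i) (\<lambda>z. \<phi> (fst z) $ j)" for j
    by (rule square_integrable_task_fst[OF assms square_integrable_feature])
  have "(\<integral>z. residual i t z * \<phi> (fst z) $ j \<partial>D i) = (second_moment *v t) $ j - cross_moment i $ j"
    for j
  proof -
    have "(\<integral>z. residual i t z * \<phi> (fst z) $ j \<partial>D i)
        = (\<integral>z. hth \<phi> t (fst z) * \<phi> (fst z) $ j \<partial>D i) - cross_moment i $ j"
      using square_integrable_imp_integrable_mult[OF
          square_integrable_task_fst[OF assms square_integrable_hth] feature_task]
        square_integrable_imp_integrable_mult[OF square_integrable_snd_task[OF assms] feature_task]
      by (simp add: residual_def left_diff_distrib cross_moment_def)
    also have "(\<integral>z. hth \<phi> t (fst z) * \<phi> (fst z) $ j \<partial>D i) = (\<integral>x. hth \<phi> t x * \<phi> x $ j \<partial>\<rho>)"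
      using square_integrable_hth square_integrable_feature
      by (intro integral_task_fst[OF assms]) (auto simp: square_integrable_def intro!: borel_measurable_times)
    also have "\<dots> = (\<integral>x. (\<Sum>k\<in>UNIV. t $ k * (\<phi> x $ j * \<phi> x $ k)) \<partial>\<rho>)"
      by (simp add: hth_def inner_vec_def sum_distrib_left sum_distrib_right ac_simps)
    also have "\<dots> = (second_moment *v t) $ j"
      using square_integrable_imp_integrable_mult[OF square_integrable_feature square_integrable_feature]
      by (simp add: second_moment_def matrix_vector_mult_def ac_simps)
    finally show ?thesis .
  qed
  then show ?thesis
    by (simp add: risk_grad_def vec_eq_iff right_diff_distrib)
qed

text \<open>The matrix integrand is expanded in the basis so that Bochner integrability and the
  integral reduce to those of the scalar products \<open>\<phi>\<^sub>j \<phi>\<^sub>k\<close>.\<close>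
lemma Keta_eq: "Keta \<rho> \<phi> \<eta> = mat 1 - (2 * \<eta>) *\<^sub>R second_moment"
proof -
  define P where "P x = (\<Sum>j\<in>UNIV. \<Sum>k\<in>UNIV. (\<phi> x $ j * \<phi> x $ k) *\<^sub>R axis j (axis k (1::real)))"
    for x
  have products: "integrable \<rho> (\<lambda>x. \<phi> x $ j * \<phi> x $ k)" for j k
    by (rule square_integrable_imp_integrable_mult[OF square_integrable_feature square_integrable_feature])
  have P_integrable: "integrable \<rho> P" unfolding P_def using products by auto
  have P_integral: "integral\<^sup>L \<rho> P = second_moment"
    unfolding P_def second_moment_def vec_lambda_eq_sum_axis[of "\<lambda>j k. \<integral>x. \<phi> x $ j * \<phi> x $ k \<partial>\<rho>"]
    using products by simp
  have "Keta \<rho> \<phi> \<eta> = (\<integral>x. mat 1 - (2 * \<eta>) *\<^sub>R P x \<partial>\<rho>)"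
    by (simp add: Keta_def P_def vec_lambda_eq_sum_axis[symmetric])
  also have "\<dots> = (\<integral>x. mat 1 \<partial>\<rho>) - (\<integral>x. (2 * \<eta>) *\<^sub>R P x \<partial>\<rho>)"
    using P_integrable rho_prob prob_space.finite_measure finite_measure.integrable_const
    by (intro Bochner_Integration.integral_diff) auto
  finally show ?thesis
    using P_integral rho_prob by (simp add: prob_space.prob_space)
qed

lemma Keta_inner_commute: "(Keta \<rho> \<phi> \<eta> *v y) \<bullet> p = y \<bullet> (Keta \<rho> \<phi> \<eta> *v p)"
proof -
  have "transpose (Keta \<rho> \<phi> \<eta>) = Keta \<rho> \<phi> \<eta>"
    by (simp add: Keta_eq second_moment_def transpose_def vec_eq_iff mat_def mult.commute)
  then show ?thesis
    by (metis dot_lmul_matrix transpose_matrix_vector)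
qed

lemma grad_risk_hth:
  "i < n \<Longrightarrow> grad (\<lambda>t. risk (D i) (hth \<phi> t)) t = 2 *\<^sub>R (second_moment *v t) - 2 *\<^sub>R cross_moment i"
  by (simp add: grad_eqI[OF has_derivative_risk_hth] risk_grad_eq)

lemma adapt_eq: "i < n \<Longrightarrow> adapt D \<phi> \<eta> i t = Keta \<rho> \<phi> \<eta> *v t + (2 * \<eta>) *\<^sub>R cross_moment i"
  by (simp add: adapt_def grad_risk_hth Keta_eq algebra_simps scaleR_matrix_vector_assoc)

lemma adapt_diff: "i < n \<Longrightarrow> adapt D \<phi> \<eta> i t - adapt D \<phi> \<eta> i t' = Keta \<rho> \<phi> \<eta> *v (t - t')"
  by (simp add: adapt_eq matrix_vector_mult_diff_distrib)

lemma grad_Lmeta_inner: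
  "grad (Lmeta D \<phi> \<eta> n) t \<bullet> p
    = (1 / real n) * (\<Sum>i<n. risk_grad i (adapt D \<phi> \<eta> i t) \<bullet> (Keta \<rho> \<phi> \<eta> *v p))"
proof -
  define g where
    "g = (1 / real n) *\<^sub>R (\<Sum>i<n. risk_grad i (adapt D \<phi> \<eta> i t) v* Keta \<rho> \<phi> \<eta>)"
  have g_inner: "g \<bullet> v = (1 / real n) * (\<Sum>i<n. risk_grad i (adapt D \<phi> \<eta> i t) \<bullet> (Keta \<rho> \<phi> \<eta> *v v))"
    for v
    by (simp add: g_def inner_sum_left dot_lmul_matrix)
  have adapt_deriv: "(adapt D \<phi> \<eta> i has_derivative (\<lambda>v. Keta \<rho> \<phi> \<eta> *v v)) (at t)" if "i < n" for i
    unfolding adapt_eq[OF that, abs_def]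
    by (intro has_derivative_add_const bounded_linear_imp_has_derivative) simp
  have "(Lmeta D \<phi> \<eta> n has_derivative (\<lambda>v. g \<bullet> v)) (at t)"
    unfolding g_inner Lmeta_def[abs_def]
    by (intro has_derivative_mult_right has_derivative_sum
        has_derivative_compose[OF adapt_deriv has_derivative_risk_hth]) auto
  then show ?thesis using g_inner grad_eqI by metis
qed

lemma frechet_grad_risk_inner:
  assumes "i < n" and a: "frechet_grad \<rho> H (risk (D i)) (hth \<phi> t) a" and g: "g \<in> H"
  shows "inner_rho \<rho> g a = 2 * (\<integral>z. residual i t z * g (fst z) \<partial>D i)"
proof (rule frechet_grad_inner_eq[OF a])
  show "(\<lambda>x. s * g x) \<in> H" for s
    by (rule H_cmult[OF g])
  show "square_integrable \<rho> g"
    by (rule square_integrable_H[OF g])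
  show "square_integrable \<rho> a"
    using a square_integrable_H by (simp add: frechet_grad_def)
  show "risk (D i) (\<lambda>x. hth \<phi> t x + s * g x) = risk (D i) (hth \<phi> t)
      + s * (2 * (\<integral>z. residual i t z * g (fst z) \<partial>D i)) + s^2 * (\<integral>x. (g x)^2 \<partial>\<rho>)" for s
    by (rule risk_add_cmult[OF \<open>i < n\<close> square_integrable_H[OF g]])
  show "\<bar>2 * (\<integral>z. residual i t z * g (fst z) \<partial>D i)\<bar>
      \<le> (2 * norm_rho (D i) (residual i t)) * norm_rho \<rho> g"
    using abs_integral_mult_le_norm_rho[OF square_integrable_residual[OF \<open>i < n\<close>]
        square_integrable_task_fst[OF \<open>i < n\<close> square_integrable_H[OF g]]]
      norm_rho_task_fst[OF \<open>i < n\<close> square_integrable_H[OF g]]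
    by (simp add: abs_mult)
qed

lemma risk_grad_inner_frechet:
  assumes "i < n" and "frechet_grad \<rho> H (risk (D i)) (hth \<phi> t) a"
  shows "risk_grad i t \<bullet> s = inner_rho \<rho> (hth \<phi> s) a"
  using frechet_grad_risk_inner[OF assms H_lin] risk_grad_inner[OF \<open>i < n\<close>] by simp

lemma norm_rho_frechet_grad_le:
  assumes "i < n" and a: "frechet_grad \<rho> H (risk (D i)) (hth \<phi> t) a"
  shows "norm_rho \<rho> a \<le> 2 * sqrt (risk (D i) (hth \<phi> t))"
proof -
  have "a \<in> H" using a by (simp add: frechet_grad_def)
  then have a_L2: "square_integrable \<rho> a" by (rule square_integrable_H)
  have "norm_rho \<rho> a * norm_rho \<rho> a = inner_rho \<rho> a a"
    by (simp add: norm_rho_def inner_rho_def power2_eq_square[symmetric])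
  also have "\<dots> = 2 * (\<integral>z. residual i t z * a (fst z) \<partial>D i)"
    by (rule frechet_grad_risk_inner[OF \<open>i < n\<close> a \<open>a \<in> H\<close>])
  also have "\<dots> \<le> 2 * (norm_rho (D i) (residual i t) * norm_rho \<rho> a)"
    using order_trans[OF abs_ge_self abs_integral_mult_le_norm_rho[OF
          square_integrable_residual[OF \<open>i < n\<close>] square_integrable_task_fst[OF \<open>i < n\<close> a_L2]]]
      norm_rho_task_fst[OF \<open>i < n\<close> a_L2]
    by simp
  finally have le: "norm_rho \<rho> a * norm_rho \<rho> a \<le> 2 * sqrt (risk (D i) (hth \<phi> t)) * norm_rho \<rho> a"
    by (simp add: sqrt_risk_hth)
  show ?thesis
  proof (cases "norm_rho \<rho> a = 0")
    case True
    then show ?thesis by (simp add: sqrt_risk_hth norm_rho_nonneg)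
  next
    case False
    then have "0 < norm_rho \<rho> a" using norm_rho_nonneg[of \<rho> a] by simp
    with le show ?thesis by (rule mult_right_le_imp_le)
  qed
qed

lemma sum_inner_frechet_grad_le:
  assumes a_grad: "\<And>i. i < n \<Longrightarrow> frechet_grad \<rho> H (risk (D i)) (hth \<phi> (adapt D \<phi> \<eta> i \<omega>)) (a i)"
    and f: "square_integrable \<rho> f"
  shows "(\<Sum>i<n. inner_rho \<rho> f (a i))
    \<le> 2 * (\<Sum>i<n. sqrt (risk (D i) (hth \<phi> (adapt D \<phi> \<eta> i \<omega>)))) * norm_rho \<rho> f"
proof -
  have "inner_rho \<rho> f (a i) \<le> 2 * sqrt (risk (D i) (hth \<phi> (adapt D \<phi> \<eta> i \<omega>))) * norm_rho \<rho> f"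
    if "i < n" for i
  proof -
    have "square_integrable \<rho> (a i)"
      using a_grad[OF that] square_integrable_H by (simp add: frechet_grad_def)
    then have "inner_rho \<rho> f (a i) \<le> norm_rho \<rho> f * norm_rho \<rho> (a i)"
      using abs_integral_mult_le_norm_rho[OF f] by (simp add: inner_rho_def abs_le_iff)
    also have "\<dots> \<le> norm_rho \<rho> f * (2 * sqrt (risk (D i) (hth \<phi> (adapt D \<phi> \<eta> i \<omega>))))"
      by (intro mult_left_mono norm_rho_frechet_grad_le[OF that a_grad[OF that]] norm_rho_nonneg)
    finally show ?thesis by (simp add: ac_simps)
  qed
  then have "(\<Sum>i<n. inner_rho \<rho> f (a i))
      \<le> (\<Sum>i<n. 2 * sqrt (risk (D i) (hth \<phi> (adapt D \<phi> \<eta> i \<omega>))) * norm_rho \<rho> f)"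
    by (intro sum_mono) simp
  then show ?thesis by (simp add: sum_distrib_left sum_distrib_right)
qed

lemma sum_inner_frechet_grad_hth:
  assumes "n > 0"
    and a_grad: "\<And>i. i < n \<Longrightarrow> frechet_grad \<rho> H (risk (D i)) (hth \<phi> (adapt D \<phi> \<eta> i \<omega>)) (a i)"
  shows "(\<Sum>i<n. inner_rho \<rho> (hth \<phi> (Keta \<rho> \<phi> \<eta> *v p)) (a i))
    = real n * (grad (Lmeta D \<phi> \<eta> n) \<omega> \<bullet> p)"
proof -
  have "(\<Sum>i<n. inner_rho \<rho> (hth \<phi> (Keta \<rho> \<phi> \<eta> *v p)) (a i))
      = (\<Sum>i<n. risk_grad i (adapt D \<phi> \<eta> i \<omega>) \<bullet> (Keta \<rho> \<phi> \<eta> *v p))"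
    using risk_grad_inner_frechet[OF _ a_grad] by (intro sum.cong) auto
  then show ?thesis using \<open>n > 0\<close> by (simp add: grad_Lmeta_inner)
qed

lemma Lmeta_diff_le_inner:
  assumes a_grad: "\<And>i. i < n \<Longrightarrow> frechet_grad \<rho> H (risk (D i)) (hth \<phi> (adapt D \<phi> \<eta> i \<omega>)) (a i)"
  shows "Lmeta D \<phi> \<eta> n \<omega> - Lmeta D \<phi> \<eta> n \<theta>
    \<le> (1 / real n) * (\<Sum>i<n. inner_rho \<rho> (hth \<phi> (Keta \<rho> \<phi> \<eta> *v (\<omega> - \<theta>))) (a i))"
proof -
  have "risk (D i) (hth \<phi> (adapt D \<phi> \<eta> i \<omega>)) - risk (D i) (hth \<phi> (adapt D \<phi> \<eta> i \<theta>))
      \<le> inner_rho \<rho> (hth \<phi> (Keta \<rho> \<phi> \<eta> *v (\<omega> - \<theta>))) (a i)" if "i < n" for i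
    using risk_hth_diff_le[OF that, of "adapt D \<phi> \<eta> i \<omega>" "adapt D \<phi> \<eta> i \<theta>"]
    by (simp add: adapt_diff[OF that] risk_grad_inner_frechet[OF that a_grad[OF that]])
  then have "(1 / real n) * (\<Sum>i<n. risk (D i) (hth \<phi> (adapt D \<phi> \<eta> i \<omega>))
        - risk (D i) (hth \<phi> (adapt D \<phi> \<eta> i \<theta>)))
      \<le> (1 / real n) * (\<Sum>i<n. inner_rho \<rho> (hth \<phi> (Keta \<rho> \<phi> \<eta> *v (\<omega> - \<theta>))) (a i))"
    by (intro mult_left_mono sum_mono) auto
  then show ?thesis by (simp add: Lmeta_def sum_subtractf right_diff_distrib)
qed

lemma Lmeta_diff_le:
  assumes "n > 0"
    and a_grad: "\<And>i. i < n \<Longrightarrow> frechet_grad \<rho> H (risk (D i)) (hth \<phi> (adapt D \<phi> \<eta> i \<omega>)) (a i)"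
    and u: "\<And>x. u x * (\<Sum>i<n. a i x) = hth \<phi> (Keta \<rho> \<phi> \<eta> *v (\<omega> - \<theta>)) x * (\<Sum>i<n. a i x)"
    and diff_L2: "square_integrable \<rho> (\<lambda>x. u x - hth \<phi> (Keta \<rho> \<phi> \<eta> *v p) x)"
  shows "Lmeta D \<phi> \<eta> n \<omega> - Lmeta D \<phi> \<eta> n \<theta> \<le> grad (Lmeta D \<phi> \<eta> n) \<omega> \<bullet> p
    + 2 * ((1 / real n) * (\<Sum>i<n. sqrt (risk (D i) (hth \<phi> (adapt D \<phi> \<eta> i \<omega>)))))
      * norm_rho \<rho> (\<lambda>x. u x - hth \<phi> (Keta \<rho> \<phi> \<eta> *v p) x)"
proof -
  define g where "g = hth \<phi> (Keta \<rho> \<phi> \<eta> *v (\<omega> - \<theta>))"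
  define w where "w = hth \<phi> (Keta \<rho> \<phi> \<eta> *v p)"
  define r where "r x = u x - w x" for x
  define S where "S x = (\<Sum>i<n. a i x)" for x
  have a_L2: "square_integrable \<rho> (a i)" if "i \<in> {..<n}" for i
    using a_grad[of i] that square_integrable_H by (simp add: frechet_grad_def)
  have w_L2: "square_integrable \<rho> w" and g_L2: "square_integrable \<rho> g"
    by (simp_all add: w_def g_def square_integrable_hth)
  have r_L2: "square_integrable \<rho> r"
    using diff_L2 by (simp add: r_def[abs_def] w_def)
  have S_L2: "square_integrable \<rho> S"
    unfolding S_def[abs_def] by (intro square_integrable_sum) (simp add: a_L2)
  have split_g: "g x * S x = w x * S x + r x * S x" for x
    using u[of x] by (auto simp: g_def S_def r_def left_diff_distrib)
  have sum_inner_S: "(\<Sum>i<n. inner_rho \<rho> f (a i)) = (\<integral>x. f x * S x \<partial>\<rho>)"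
    if "square_integrable \<rho> f" for f
    unfolding S_def using that a_L2 by (intro sum_inner_rho_eq_integral) auto
  have "(\<Sum>i<n. inner_rho \<rho> g (a i)) = (\<integral>x. g x * S x \<partial>\<rho>)"
    by (rule sum_inner_S[OF g_L2])
  also have "\<dots> = (\<integral>x. w x * S x + r x * S x \<partial>\<rho>)"
    by (simp add: split_g)
  also have "\<dots> = (\<integral>x. w x * S x \<partial>\<rho>) + (\<integral>x. r x * S x \<partial>\<rho>)"
    using square_integrable_imp_integrable_mult S_L2 w_L2 r_L2
    by (intro Bochner_Integration.integral_add) auto
  also have "\<dots> = (\<Sum>i<n. inner_rho \<rho> w (a i)) + (\<Sum>i<n. inner_rho \<rho> r (a i))"
    by (simp add: sum_inner_S w_L2 r_L2)
  finally have "Lmeta D \<phi> \<eta> n \<omega> - Lmeta D \<phi> \<eta> n \<theta>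
      \<le> (1 / real n) * ((\<Sum>i<n. inner_rho \<rho> w (a i)) + (\<Sum>i<n. inner_rho \<rho> r (a i)))"
    using Lmeta_diff_le_inner[OF a_grad, of \<theta>] by (simp add: g_def)
  also have "\<dots> \<le> (1 / real n) * (real n * (grad (Lmeta D \<phi> \<eta> n) \<omega> \<bullet> p)
      + 2 * (\<Sum>i<n. sqrt (risk (D i) (hth \<phi> (adapt D \<phi> \<eta> i \<omega>)))) * norm_rho \<rho> r)"
    using sum_inner_frechet_grad_hth[OF \<open>n > 0\<close> a_grad, of p]
      sum_inner_frechet_grad_le[OF a_grad r_L2]
    by (intro mult_left_mono) (auto simp: w_def)
  also have "\<dots> = grad (Lmeta D \<phi> \<eta> n) \<omega> \<bullet> p
      + 2 * ((1 / real n) * (\<Sum>i<n. sqrt (risk (D i) (hth \<phi> (adapt D \<phi> \<eta> i \<omega>))))) * norm_rho \<rho> r"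
    using \<open>n > 0\<close> by (simp add: distrib_left)
  finally show ?thesis
    by (simp add: r_def[abs_def] w_def)
qed

lemma Lmeta_diff_le_hth:
  assumes "n > 0"
    and a_grad: "\<And>i. i < n \<Longrightarrow> frechet_grad \<rho> H (risk (D i)) (hth \<phi> (adapt D \<phi> \<eta> i \<omega>)) (a i)"
  shows "Lmeta D \<phi> \<eta> n \<omega> - Lmeta D \<phi> \<eta> n \<theta>
    \<le> 2 * ((1 / real n) * (\<Sum>i<n. sqrt (risk (D i) (hth \<phi> (adapt D \<phi> \<eta> i \<omega>)))))
      * norm_rho \<rho> (hth \<phi> (Keta \<rho> \<phi> \<eta> *v (\<omega> - \<theta>)))"
  using Lmeta_diff_le[OF assms, of "hth \<phi> (Keta \<rho> \<phi> \<eta> *v (\<omega> - \<theta>))" \<theta> 0]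
  by (simp add: hth_def square_integrable_hth[unfolded hth_def])

lemma Lmeta_diff_le_norm_rho_ext:
  assumes "n > 0"
    and a_grad: "\<And>i. i < n \<Longrightarrow> frechet_grad \<rho> H (risk (D i)) (hth \<phi> (adapt D \<phi> \<eta> i \<omega>)) (a i)"
    and u: "\<And>x. u x * (\<Sum>i<n. a i x) = hth \<phi> (Keta \<rho> \<phi> \<eta> *v (\<omega> - \<theta>)) x * (\<Sum>i<n. a i x)"
    and finite_norm: "norm_rho_ext \<rho> (\<lambda>x. u x - (Keta \<rho> \<phi> \<eta> *v \<phi> x) \<bullet> p) = ereal r"
  shows "Lmeta D \<phi> \<eta> n \<omega> - Lmeta D \<phi> \<eta> n \<theta> \<le> grad (Lmeta D \<phi> \<eta> n) \<omega> \<bullet> p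
    + 2 * ((1 / real n) * (\<Sum>i<n. sqrt (risk (D i) (hth \<phi> (adapt D \<phi> \<eta> i \<omega>))))) * r"
proof -
  have K_phi: "(Keta \<rho> \<phi> \<eta> *v \<phi> x) \<bullet> p = hth \<phi> (Keta \<rho> \<phi> \<eta> *v p) x" for x
    by (simp add: hth_def Keta_inner_commute)
  have "square_integrable \<rho> (\<lambda>x. u x - hth \<phi> (Keta \<rho> \<phi> \<eta> *v p) x)"
    and "r = norm_rho \<rho> (\<lambda>x. u x - hth \<phi> (Keta \<rho> \<phi> \<eta> *v p) x)"
    using finite_norm unfolding K_phi norm_rho_ext_def square_integrable_def by (auto split: if_splits)
  then show ?thesis using Lmeta_diff_le[OF assms(1-3)] by simp
qed

lemma weighted_mean_hth_adapt_diff: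
  "(\<Sum>i<n. a i x * (hth \<phi> (adapt D \<phi> \<eta> i \<omega>) x - hth \<phi> (adapt D \<phi> \<eta> i \<theta>) x)) / (\<Sum>i<n. a i x)
      * (\<Sum>i<n. a i x)
    = hth \<phi> (Keta \<rho> \<phi> \<eta> *v (\<omega> - \<theta>)) x * (\<Sum>i<n. a i x)"
proof -
  have "(\<Sum>i<n. a i x * (hth \<phi> (adapt D \<phi> \<eta> i \<omega>) x - hth \<phi> (adapt D \<phi> \<eta> i \<theta>) x))
      = (\<Sum>i<n. a i x) * hth \<phi> (Keta \<rho> \<phi> \<eta> *v (\<omega> - \<theta>)) x"
    by (simp add: hth_def inner_diff_right[symmetric] adapt_diff sum_distrib_right)
  then show ?thesis by (cases "(\<Sum>i<n. a i x) = 0") simp_all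
qed

end

theorem corollaryA2:
  fixes \<rho> :: "'x measure"
    and D :: "nat \<Rightarrow> ('x \<times> real) measure"
    and n :: nat
    and \<phi> :: "'x \<Rightarrow> real^'d"
    and \<eta> \<epsilon> :: real
    and H :: "('x \<Rightarrow> real) set"
    and \<theta>star \<omega> :: "real^'d"
    and a :: "nat \<Rightarrow> 'x \<Rightarrow> real"
  assumes n_pos: "n > 0"
    and eta_pos: "\<eta> > 0"
    and rho_prob: "prob_space \<rho>"
    and D_prob: "\<And>i. i < n \<Longrightarrow> prob_space (D i)"
    and D_sets: "\<And>i. i < n \<Longrightarrow> sets (D i) = sets (\<rho> \<Otimes>\<^sub>M borel)"
    and D_marg: "\<And>i. i < n \<Longrightarrow> distr (D i) \<rho> fst = \<rho>"
    and y_L2: "\<And>i. i < n \<Longrightarrow> integrable (D i) (\<lambda>z. (snd z)^2)"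
    and H: "hilbert_fun_space \<rho> H"
    and H_lin: "\<And>\<theta>. hth \<phi> \<theta> \<in> H"
    and R_convex: "\<And>i. i < n \<Longrightarrow> convex_on_H H (risk (D i))"
    and R_diff: "\<And>i. i < n \<Longrightarrow> frechet_differentiable_on \<rho> H (risk (D i))"
    and opt: "\<And>\<theta>. Lmeta D \<phi> \<eta> n \<theta>star \<le> Lmeta D \<phi> \<eta> n \<theta>"
    and stat: "\<And>v. v \<in> cball 0 1 \<Longrightarrow> grad (Lmeta D \<phi> \<eta> n) \<omega> \<bullet> v \<le> \<epsilon>"
    and a_grad: "\<And>i. i < n \<Longrightarrow> frechet_grad \<rho> H (risk (D i)) (hth \<phi> (adapt D \<phi> \<eta> i \<omega>)) (a i)"
  shows "\<forall>R>0.
    (let u = (\<lambda>x'. (\<Sum>i<n. a i x' * (hth \<phi> (adapt D \<phi> \<eta> i \<omega>) x' - hth \<phi> (adapt D \<phi> \<eta> i \<theta>star) x'))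
                   / (\<Sum>i<n. a i x'));
         Rbar = (1 / real n) * (\<Sum>i<n. sqrt (risk (D i) (hth \<phi> (adapt D \<phi> \<eta> i \<omega>))));
         K = Keta \<rho> \<phi> \<eta>
     in ereal (Lmeta D \<phi> \<eta> n \<omega> - Lmeta D \<phi> \<eta> n \<theta>star)
          \<le> ereal (R * \<epsilon>) + ereal (2 * Rbar) *
             (INF v\<in>cball 0 1. norm_rho_ext \<rho> (\<lambda>x. u x - (K *v \<phi> x) \<bullet> (R *\<^sub>R v))))"
proof -
  interpret square_loss_tasks \<rho> D n \<phi> H
    by (rule square_loss_tasks.intro) (fact rho_prob D_sets D_marg y_L2 H H_lin)+
  define u where "u = (\<lambda>x'. (\<Sum>i<n. a i x' * (hth \<phi> (adapt D \<phi> \<eta> i \<omega>) x'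
    - hth \<phi> (adapt D \<phi> \<eta> i \<theta>star) x')) / (\<Sum>i<n. a i x'))"
  define Rbar where "Rbar = (1 / real n) * (\<Sum>i<n. sqrt (risk (D i) (hth \<phi> (adapt D \<phi> \<eta> i \<omega>))))"
  have u_weights: "u x * (\<Sum>i<n. a i x) = hth \<phi> (Keta \<rho> \<phi> \<eta> *v (\<omega> - \<theta>star)) x * (\<Sum>i<n. a i x)" for x
    unfolding u_def by (rule weighted_mean_hth_adapt_diff)
  have "ereal (Lmeta D \<phi> \<eta> n \<omega> - Lmeta D \<phi> \<eta> n \<theta>star) \<le> ereal (R * \<epsilon>) + ereal (2 * Rbar)
      * (INF v\<in>cball 0 1. norm_rho_ext \<rho> (\<lambda>x. u x - (Keta \<rho> \<phi> \<eta> *v \<phi> x) \<bullet> (R *\<^sub>R v)))"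
    if "R > 0" for R
  proof (rule ereal_le_add_mult_INF)
    have "Lmeta D \<phi> \<eta> n \<omega> - Lmeta D \<phi> \<eta> n \<theta>star
        \<le> 2 * Rbar * norm_rho \<rho> (hth \<phi> (Keta \<rho> \<phi> \<eta> *v (\<omega> - \<theta>star)))"
      unfolding Rbar_def by (rule Lmeta_diff_le_hth[OF n_pos a_grad])
    moreover have "0 \<le> R * \<epsilon>" using stat[of 0] \<open>R > 0\<close> by simp
    ultimately show "Lmeta D \<phi> \<eta> n \<omega> - Lmeta D \<phi> \<eta> n \<theta>star \<le> R * \<epsilon>" if "2 * Rbar = 0"
      using that by simp
    show "Lmeta D \<phi> \<eta> n \<omega> - Lmeta D \<phi> \<eta> n \<theta>star \<le> R * \<epsilon> + 2 * Rbar * r"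
      if "v \<in> cball 0 1" and "norm_rho_ext \<rho> (\<lambda>x. u x - (Keta \<rho> \<phi> \<eta> *v \<phi> x) \<bullet> (R *\<^sub>R v)) = ereal r"
      for v r
    proof -
      have "grad (Lmeta D \<phi> \<eta> n) \<omega> \<bullet> (R *\<^sub>R v) \<le> R * \<epsilon>" using stat[OF that(1)] \<open>R > 0\<close> by simp
      then show ?thesis
        using Lmeta_diff_le_norm_rho_ext[OF n_pos a_grad u_weights that(2)] unfolding Rbar_def by linarith
    qed
  qed (simp_all add: Rbar_def sqrt_risk_hth norm_rho_nonneg sum_nonneg norm_rho_ext_def)
  then show ?thesis unfolding Let_def u_def Rbar_def by blast
qed

end
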